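(* Let $\Gamma=(V,E,m)$ be a connected even-labeled graph, $u\in V$ and $k\ge 2$. Let $M_{\Gamma,u,k}$ be the Alexander matrix of the standard presentation of $\mathbb{A}_{\Gamma,u,k}$. Then $\operatorname{corank}(M_{\Gamma,u,k})\le 1$, where the corank is the number of columns (generators) minus the rank over the field of fractions of $\Lambda=\mathbb{C}[H_1(\mathbb{A}_{\Gamma,u,k})]$.
   Context: Setting: $\Gamma=(V,E,m)$ finite simple graph with even labels $m_e=2\ell_e$; $\mathbb{A}_\Gamma=\langle V\mid (xy)^{\ell_e}=(yx)^{\ell_e},\ \{x,y\}\in E\rangle$. For $u\in V$, $k\ge2$, $\mathbb{A}_{\Gamma,u,k}=\ker(\mathbb{A}_\Gamma\to\mathbb{Z}_k,\ u\mapsto1,\ v\mapsto0\ (v\ne u))$. $V_{2,u}$ = vertices joined to $u$ by an edge of label 2, $W=V\setminus(\{u\}\cup V_{2,u})$. Standard presentation of $\mathbb{A}_{\Gamma,u,k}$: generators $\bar u=u^k$, $v\in V_{2,u}$, $w_i=u^iwu^{-i}$ ($w\in W$, $0\le i<k$); relations $v\bar u=\bar uv$ ($v\in V_{2,u}$); $(xy)^{\ell_e}=(yx)^{\ell_e}$ for $x,y\in V_{2,u}$ adjacent; $(vw_i)^{\ell_e}=(w_iv)^{\ell_e}$ for $v\in V_{2,u},w\in W$ adjacent; $(w_iw'_i)^{\ell_e}=(w'_iw_i)^{\ell_e}$ for $w,w'\in W$ adjacent; and for each $w\in W$ adjacent to $u$ and each $0\le i<k$: $W_i\cdots W_{i+\ell_e-1}=W_{i+1}\cdots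 W_{i+\ell_e}$ with $W_j=\bar u^qw_s\bar u^{-q}$ for $j=qk+s$, $0\le s<k$. $H_1(\mathbb{A}_{\Gamma,u,k})$ is free abelian. The Alexander matrix of a finite presentation has entries the Fox derivatives $\partial R_i/\partial x_j$ of the relators (a relation $A=B$ giving relator $AB^{-1}$) mapped to $\mathbb{C}[H_1]$ via abelianization; rows = relations, columns = generators. *)

theory Defs
  imports Complex_Main "HOL-Library.Poly_Mapping"
begin

definition even_labeled_graph :: "'v set \<Rightarrow> 'v set set \<Rightarrow> ('v set \<Rightarrow> nat) \<Rightarrow> bool" where
  "even_labeled_graph V E m \<longleftrightarrow> finite V \<and>
     (\<forall>e\<in>E. \<exists>x y. e = {x, y} \<and> x \<noteq> y \<and> x \<in> V \<and> y \<in> V) \<and>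
     (\<forall>e\<in>E. even (m e) \<and> 2 \<le> m e)"

definition graph_connected :: "'v set \<Rightarrow> 'v set set \<Rightarrow> bool" where
  "graph_connected V E \<longleftrightarrow>
     (\<forall>x\<in>V. \<forall>y\<in>V. (x, y) \<in> {(a, b). {a, b} \<in> E}\<^sup>*)"

definition half_label :: "('v set \<Rightarrow> nat) \<Rightarrow> 'v set \<Rightarrow> nat" where
  "half_label m e = m e div 2"

text \<open>Generators: Ubar = u^k, Vg v for v in V_{2,u}, Wg w i = u^i w u^{-i}.\<close>
datatype 'v gen = Ubar | Vg 'v | Wg 'v nat

text \<open>Words in the free group: letters (g, False) = g, (g, True) = g^{-1}.\<close>
type_synonym 'g word = "('g \<times> bool) list"

definition inv_word :: "'g word \<Rightarrow> 'g word" where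
  "inv_word w = rev (map (\<lambda>(g, b). (g, \<not> b)) w)"

definition rel_word :: "'g word \<Rightarrow> 'g word \<Rightarrow> 'g word" where
  "rel_word A B = A @ inv_word B"

definition pos_pow :: "nat \<Rightarrow> 'g list \<Rightarrow> 'g word" where
  "pos_pow l gs = concat (replicate l (map (\<lambda>g. (g, False)) gs))"

definition V2u :: "'v set \<Rightarrow> 'v set set \<Rightarrow> ('v set \<Rightarrow> nat) \<Rightarrow> 'v \<Rightarrow> 'v set" where
  "V2u V E m u = {v \<in> V. {u, v} \<in> E \<and> m {u, v} = 2}"

definition Wu :: "'v set \<Rightarrow> 'v set set \<Rightarrow> ('v set \<Rightarrow> nat) \<Rightarrow> 'v \<Rightarrow> 'v set" where
  "Wu V E m u = V - ({u} \<union> V2u V E m u)"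

definition gens :: "'v set \<Rightarrow> 'v set set \<Rightarrow> ('v set \<Rightarrow> nat) \<Rightarrow> 'v \<Rightarrow> nat \<Rightarrow> 'v gen set" where
  "gens V E m u k = insert Ubar (Vg ` V2u V E m u \<union>
      {Wg w i | w i. w \<in> Wu V E m u \<and> i < k})"

definition Wj_word :: "nat \<Rightarrow> 'v \<Rightarrow> nat \<Rightarrow> 'v gen word" where
  "Wj_word k w j = replicate (j div k) (Ubar, False) @ [(Wg w (j mod k), False)]
       @ replicate (j div k) (Ubar, True)"

text \<open>The relators of the standard presentation. A linear order on vertices is
  used only to pick one orientation (x < y) of each symmetric relation on an edge.\<close>
definition relators :: "'v::linorder set \<Rightarrow> 'v set set \<Rightarrow> ('v set \<Rightarrow> nat) \<Rightarrow> 'v \<Rightarrow> nat \<Rightarrow> 'v gen word set" where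
  "relators V E m u k =
     (let V2 = V2u V E m u; W = Wu V E m u; l = half_label m in
       {rel_word [(Vg v, False), (Ubar, False)] [(Ubar, False), (Vg v, False)] | v. v \<in> V2}
     \<union> {rel_word (pos_pow (l {x, y}) [Vg x, Vg y]) (pos_pow (l {x, y}) [Vg y, Vg x])
          | x y. x \<in> V2 \<and> y \<in> V2 \<and> x < y \<and> {x, y} \<in> E}
     \<union> {rel_word (pos_pow (l {v, w}) [Vg v, Wg w i]) (pos_pow (l {v, w}) [Wg w i, Vg v])
          | v w i. v \<in> V2 \<and> w \<in> W \<and> {v, w} \<in> E \<and> i < k}
     \<union> {rel_word (pos_pow (l {w, w'}) [Wg w i, Wg w' i]) (pos_pow (l {w, w'}) [Wg w' i, Wg w i])
          | w w' i. w \<in> W \<and> w' \<in> W \<and> w < w' \<and> {w, w'} \<in> E \<and> i < k}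
     \<union> {rel_word (concat (map (Wj_word k w) [i..<i + l {u, w}]))
                 (concat (map (Wj_word k w) [i + 1..<i + l {u, w} + 1]))
          | w i. w \<in> W \<and> {u, w} \<in> E \<and> i < k})"

text \<open>Abelianization of the free group on 'g: exponent-sum vector in Z^('g).\<close>
definition ab_word :: "'g word \<Rightarrow> ('g \<Rightarrow>\<^sub>0 int)" where
  "ab_word w = sum_list (map (\<lambda>(g, b). Poly_Mapping.single g (if b then -1 else 1)) w)"

text \<open>C[Z^('g)]: the group ring of the abelianized free group.\<close>
type_synonym 'g gring = "('g \<Rightarrow>\<^sub>0 int) \<Rightarrow>\<^sub>0 complex"

definition grp_elt :: "('g \<Rightarrow>\<^sub>0 int) \<Rightarrow> 'g gring" where
  "grp_elt a = Poly_Mapping.single a 1"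

text \<open>Fox derivative d w / d x (in Z[F]) followed by abelianization F -> Z^('g):
  d(y_1^{e_1}...y_n^{e_n})/dx = sum over i with y_i = x of
  y_1^{e_1}...y_{i-1}^{e_{i-1}} if e_i = 1, and - y_1^{e_1}...y_i^{e_i} if e_i = -1.\<close>
definition fox_ab :: "'g word \<Rightarrow> 'g \<Rightarrow> 'g gring" where
  "fox_ab w x = (\<Sum>i<length w. (case w ! i of (g, b) \<Rightarrow>
      if g = x then (if b then - grp_elt (ab_word (take (Suc i) w))
                         else grp_elt (ab_word (take i w)))
      else 0))"

text \<open>The subgroup N of Z^('g) generated by the abelianized relators, so that
  H_1 = Z^('g) / N.\<close>
inductive_set rel_subgroup :: "'g word set \<Rightarrow> ('g \<Rightarrow>\<^sub>0 int) set" for Rs where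
  zero: "0 \<in> rel_subgroup Rs"
| plus: "a \<in> rel_subgroup Rs \<Longrightarrow> r \<in> Rs \<Longrightarrow> a + ab_word r \<in> rel_subgroup Rs"
| minus: "a \<in> rel_subgroup Rs \<Longrightarrow> r \<in> Rs \<Longrightarrow> a - ab_word r \<in> rel_subgroup Rs"

text \<open>An element p of C[Z^('g)] maps to zero in Lambda = C[H_1] = C[Z^('g)/N]
  iff for every coset h + N the sum of the coefficients of p over the coset vanishes.\<close>
definition zero_in_Lambda :: "('g \<Rightarrow>\<^sub>0 int) set \<Rightarrow> 'g gring \<Rightarrow> bool" where
  "zero_in_Lambda N p \<longleftrightarrow>
     (\<forall>h. (\<Sum>a\<in>{a \<in> Poly_Mapping.keys p. a - h \<in> N}. Poly_Mapping.lookup p a) = 0)"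

text \<open>A set S of columns of the matrix M (rows Rs, entries in C[Z^('g)], read in
  Lambda) is linearly independent over Frac(Lambda); since Lambda is a domain this
  means: independent over Lambda (denominators can be cleared).\<close>
definition cols_independent ::
  "('g \<Rightarrow>\<^sub>0 int) set \<Rightarrow> 'r set \<Rightarrow> ('r \<Rightarrow> 'g \<Rightarrow> 'g gring) \<Rightarrow> 'g set \<Rightarrow> bool" where
  "cols_independent N Rs M S \<longleftrightarrow>
     (\<forall>c :: 'g \<Rightarrow> 'g gring.
        (\<forall>r\<in>Rs. zero_in_Lambda N (\<Sum>g\<in>S. c g * M r g)) \<longrightarrow> (\<forall>g\<in>S. zero_in_Lambda N (c g)))"

definition frac_rank ::
  "('g \<Rightarrow>\<^sub>0 int) set \<Rightarrow> 'r set \<Rightarrow> 'g set \<Rightarrow> ('r \<Rightarrow> 'g \<Rightarrow> 'g gring) \<Rightarrow> nat" where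
  "frac_rank N Rs Cs M = Max {card S | S. S \<subseteq> Cs \<and> cols_independent N Rs M S}"

text \<open>Alexander matrix M_{Gamma,u,k}: rows = relators, columns = generators,
  entries = abelianized Fox derivatives, read in Lambda = C[H_1(A_{Gamma,u,k})].\<close>
definition alexander_corank :: "'v::linorder set \<Rightarrow> 'v set set \<Rightarrow> ('v set \<Rightarrow> nat) \<Rightarrow> 'v \<Rightarrow> nat \<Rightarrow> nat" where
  "alexander_corank V E m u k =
     (let Rs = relators V E m u k; Cs = gens V E m u k in
        card Cs - frac_rank (rel_subgroup Rs) Rs Cs (\<lambda>r g. fox_ab r g))"

end

theory Submission
  imports Defs
begin

text \<open>The corank is at most one because the columns of all generators other than \<open>Ubar\<close> are
  independent: if a combination \<open>c\<close> of them annihilates every row, every \<open>c\<^sub>g\<close> vanishes in \<open>\<Lambda>\<close>.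
  The relation \<open>v Ubar = Ubar v\<close> kills \<open>c\<^sub>v\<close> for \<open>v \<in> V\<^sub>2\<^sub>,\<^sub>u\<close>; the \<open>k\<close> cyclic relations of a
  vertex \<open>w \<in> W\<close> adjacent to \<open>u\<close> kill the coefficients of all \<open>w\<^sub>i\<close>; and the Artin relation
  \<open>(xy)\<^sup>l = (yx)\<^sup>l\<close> of an edge passes the vanishing from \<open>x\<close> to \<open>y\<close>, so connectivity reaches all
  of \<open>W\<close>. Every step cancels a factor \<open>t\<^sub>a - t\<^sub>b\<close> of \<open>\<Lambda>\<close>, which is not a zero divisor as soon as
  some additive functional on the free abelian group kills all relators but separates \<open>a\<close> from
  \<open>b\<close>; thus \<open>H\<^sub>1\<close> itself never has to be computed.\<close>

section \<open>Vanishing in the group ring of \<open>H\<^sub>1\<close>\<close>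

definition coset_sum :: "('g \<Rightarrow>\<^sub>0 int) set \<Rightarrow> 'g gring \<Rightarrow> ('g \<Rightarrow>\<^sub>0 int) \<Rightarrow> complex" where
  "coset_sum N p h = (\<Sum>a\<in>{a \<in> Poly_Mapping.keys p. a - h \<in> N}. Poly_Mapping.lookup p a)"

lemma zero_in_Lambda_iff_coset_sum: "zero_in_Lambda N p \<longleftrightarrow> (\<forall>h. coset_sum N p h = 0)"
  by (simp add: zero_in_Lambda_def coset_sum_def)

lemma coset_sum_superset:
  assumes "finite K" "Poly_Mapping.keys p \<subseteq> K"
  shows "coset_sum N p h = (\<Sum>a\<in>{a \<in> K. a - h \<in> N}. Poly_Mapping.lookup p a)"
  unfolding coset_sum_def
  by (rule sum.mono_neutral_left) (use assms in \<open>auto simp: in_keys_iff\<close>)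

lemma coset_sum_add: "coset_sum N (p + q) h = coset_sum N p h + coset_sum N q h"
proof -
  let ?K = "Poly_Mapping.keys p \<union> Poly_Mapping.keys q"
  have "coset_sum N (p + q) h = (\<Sum>a\<in>{a \<in> ?K. a - h \<in> N}. Poly_Mapping.lookup (p + q) a)"
    by (rule coset_sum_superset) (simp_all add: keys_add)
  also have "\<dots> = coset_sum N p h + coset_sum N q h"
    by (subst (1 2) coset_sum_superset[of ?K]) (auto simp: lookup_add sum.distrib)
  finally show ?thesis .
qed

lemma coset_sum_uminus: "coset_sum N (- p) h = - coset_sum N p h"
  by (simp add: coset_sum_def sum_negf)

lemma coset_sum_diff: "coset_sum N (p - q) h = coset_sum N p h - coset_sum N q h"
  using coset_sum_add[of N p "- q" h] by (simp add: coset_sum_uminus)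

lemma coset_sum_single:
  "coset_sum N (Poly_Mapping.single a z) h = (if a - h \<in> N then z else 0)"
  by (subst coset_sum_superset[of "{a}"]) (auto simp: Collect_conv_if)

lemma coset_sum_nonzero_imp_key:
  assumes "coset_sum N p h \<noteq> 0"
  obtains a where "a \<in> Poly_Mapping.keys p" "a - h \<in> N"
  using assms unfolding coset_sum_def by (metis (no_types, lifting) empty_Collect_eq sum.empty)

lemma update_eq_add_single:
  "a \<notin> Poly_Mapping.keys f \<Longrightarrow> Poly_Mapping.update a b f = f + Poly_Mapping.single a b"
  by (rule poly_mapping_eqI) (auto simp: lookup_update lookup_add lookup_single in_keys_iff when_def)

lemma lookup_mult_single:
  fixes p :: "('a::ab_group_add) \<Rightarrow>\<^sub>0 'b::comm_ring_1"
  shows "Poly_Mapping.lookup (p * Poly_Mapping.single a z) x = Poly_Mapping.lookup p (x - a) * z"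
proof (induction p rule: update_induct)
  case const
  then show ?case by simp
next
  case (update f b y)
  then show ?case
    by (auto simp: update_eq_add_single distrib_right mult_single lookup_add lookup_single when_def
        algebra_simps)
qed

lemma coset_sum_mult_single:
  "coset_sum N (p * Poly_Mapping.single a z) h = z * coset_sum N p (h - a)"
proof -
  let ?K = "(\<lambda>b. b + a) ` Poly_Mapping.keys p"
  have "Poly_Mapping.keys (p * Poly_Mapping.single a z) \<subseteq> ?K"
    by (auto simp: in_keys_iff lookup_mult_single intro!: image_eqI[where x = "_ - a"])
  then have "coset_sum N (p * Poly_Mapping.single a z) h
      = (\<Sum>x\<in>{x \<in> ?K. x - h \<in> N}. Poly_Mapping.lookup p (x - a) * z)"
    by (subst coset_sum_superset) (simp_all add: lookup_mult_single)
  also have "{x \<in> ?K. x - h \<in> N} = (\<lambda>b. b + a) ` {b \<in> Poly_Mapping.keys p. b - (h - a) \<in> N}"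
    by (auto simp: algebra_simps)
  also have "(\<Sum>x\<in>\<dots>. Poly_Mapping.lookup p (x - a) * z) = z * coset_sum N p (h - a)"
    by (subst sum.reindex) (auto simp: inj_on_def coset_sum_def sum_distrib_left mult.commute)
  finally show ?thesis .
qed

lemma zero_in_Lambda_0: "zero_in_Lambda N 0"
  by (simp add: zero_in_Lambda_def)

lemma zero_in_Lambda_add:
  "zero_in_Lambda N p \<Longrightarrow> zero_in_Lambda N q \<Longrightarrow> zero_in_Lambda N (p + q)"
  by (simp add: zero_in_Lambda_iff_coset_sum coset_sum_add)

lemma zero_in_Lambda_uminus_iff: "zero_in_Lambda N (- p) \<longleftrightarrow> zero_in_Lambda N p"
  by (simp add: zero_in_Lambda_iff_coset_sum coset_sum_uminus)

lemma zero_in_Lambda_diff: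
  "zero_in_Lambda N p \<Longrightarrow> zero_in_Lambda N q \<Longrightarrow> zero_in_Lambda N (p - q)"
  by (simp add: zero_in_Lambda_iff_coset_sum coset_sum_diff)

lemma zero_in_Lambda_diff_commute: "zero_in_Lambda N (p - q) \<longleftrightarrow> zero_in_Lambda N (q - p)"
  using zero_in_Lambda_uminus_iff[of N "p - q"] by simp

lemma zero_in_Lambda_mult_right:
  fixes p :: "'g gring"
  assumes "zero_in_Lambda N p"
  shows "zero_in_Lambda N (p * q)"
proof (induction q rule: update_induct)
  case const
  then show ?case by (simp add: zero_in_Lambda_0)
next
  case (update f a z)
  then show ?case
    using assms by (simp add: update_eq_add_single distrib_left zero_in_Lambda_iff_coset_sum
        coset_sum_add coset_sum_mult_single)
qed

lemma zero_in_Lambda_mult_left: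
  fixes p :: "'g gring"
  shows "zero_in_Lambda N q \<Longrightarrow> zero_in_Lambda N (p * q)"
  using zero_in_Lambda_mult_right[of N q p] by (simp add: mult.commute)

text \<open>Multiplication by \<open>t\<^sub>a - t\<^sub>b\<close> compares coset sums shifted by \<open>a - b\<close>, so a nonzero coset sum
  of \<open>p\<close> would recur on the cosets of \<open>h + n (a - b)\<close> for all \<open>n\<close>; these have pairwise distinct
  \<open>\<psi>\<close>-values, contradicting the finite support of \<open>p\<close>.\<close>

lemma zero_in_Lambda_cancel_grp_elt_diff:
  fixes p :: "'g gring" and \<psi> :: "('g \<Rightarrow>\<^sub>0 int) \<Rightarrow> int"
  assumes zero: "zero_in_Lambda N (p * (grp_elt a - grp_elt b))"
    and \<psi>: "additive \<psi>" and vanish: "\<And>x. x \<in> N \<Longrightarrow> \<psi> x = 0" and "\<psi> a \<noteq> \<psi> b"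
  shows "zero_in_Lambda N p"
  unfolding zero_in_Lambda_iff_coset_sum
proof (rule allI, rule ccontr)
  fix h assume nonzero: "coset_sum N p h \<noteq> 0"
  define d where "d = a - b"
  have "\<psi> d \<noteq> 0" using \<open>\<psi> a \<noteq> \<psi> b\<close> by (simp add: d_def additive.diff[OF \<psi>])
  have shift: "coset_sum N p (g + d) = coset_sum N p g" for g
    using zero unfolding zero_in_Lambda_iff_coset_sum
    by (drule_tac x = "g + a" in spec)
       (simp add: right_diff_distrib coset_sum_diff grp_elt_def coset_sum_mult_single d_def algebra_simps)
  have recur: "coset_sum N p (h + (\<Sum>_<n. d)) \<noteq> 0" for n :: nat
    using nonzero by (induction n) (simp_all add: shift flip: add.assoc)
  have "\<psi> h + int n * \<psi> d \<in> \<psi> ` Poly_Mapping.keys p" for n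
  proof -
    obtain x where x: "x \<in> Poly_Mapping.keys p" "x - (h + (\<Sum>_<n. d)) \<in> N"
      using coset_sum_nonzero_imp_key[OF recur] .
    have "\<psi> (x - (h + (\<Sum>_<n. d))) = 0" using vanish x(2) .
    then have "\<psi> x = \<psi> h + int n * \<psi> d"
      by (simp add: additive.diff[OF \<psi>] additive.add[OF \<psi>] additive.sum[OF \<psi>])
    then show ?thesis using x(1) by (metis image_eqI)
  qed
  then have "finite (range (\<lambda>n. \<psi> h + int n * \<psi> d))"
    by (meson finite_imageI finite_keys finite_subset image_subset_iff)
  moreover have "inj (\<lambda>n. \<psi> h + int n * \<psi> d)"
    using \<open>\<psi> d \<noteq> 0\<close> by (auto simp: inj_def)
  ultimately show False
    using finite_imageD by blast
qed

section \<open>Fox derivatives\<close>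

lemma ab_word_Nil [simp]: "ab_word [] = 0"
  by (simp add: ab_word_def)

lemma ab_word_append: "ab_word (xs @ ys) = ab_word xs + ab_word ys"
  by (simp add: ab_word_def)

lemma ab_word_Cons: "ab_word (x # xs) = ab_word [x] + ab_word xs"
  by (simp add: ab_word_def)

lemma ab_word_letter: "ab_word [(g, b)] = Poly_Mapping.single g (if b then -1 else 1)"
  by (simp add: ab_word_def)

lemma ab_word_inv_word: "ab_word (inv_word w) = - ab_word w"
  by (induction w) (auto simp: inv_word_def ab_word_def single_uminus)

lemma ab_word_rel_word: "ab_word (rel_word A B) = ab_word A - ab_word B"
  by (simp add: rel_word_def ab_word_append ab_word_inv_word)

lemma grp_elt_0 [simp]: "grp_elt 0 = 1"
  by (simp add: grp_elt_def)

lemma grp_elt_add: "grp_elt (a + b) = grp_elt a * grp_elt b"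
  by (simp add: grp_elt_def mult_single)

lemma grp_elt_power: "grp_elt a ^ n = grp_elt (\<Sum>_<n. a)"
  by (induction n) (simp_all add: grp_elt_add)

lemma fox_ab_Nil: "fox_ab [] x = 0"
  by (simp add: fox_ab_def)

lemma fox_ab_letter:
  "fox_ab [(g, b)] x = (if g = x then (if b then - grp_elt (ab_word [(g, b)]) else 1) else 0)"
  by (simp add: fox_ab_def)

lemma fox_ab_Cons: "fox_ab (y # w) x = fox_ab [y] x + grp_elt (ab_word [y]) * fox_ab w x"
proof -
  define T where "T i = (case (y # w) ! i of (g, b) \<Rightarrow>
      if g = x then (if b then - grp_elt (ab_word (take (Suc i) (y # w)))
                         else grp_elt (ab_word (take i (y # w))))
      else 0)" for i
  have prefix: "grp_elt (ab_word (y # take n w)) = grp_elt (ab_word [y]) * grp_elt (ab_word (take n w))"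
    for n
    by (simp add: ab_word_Cons[of y "take n w"] grp_elt_add)
  have "fox_ab (y # w) x = T 0 + (\<Sum>i<length w. T (Suc i))"
    unfolding fox_ab_def T_def by (simp only: length_Cons sum.lessThan_Suc_shift)
  also have "T 0 = fox_ab [y] x"
    by (cases y) (simp add: T_def fox_ab_def)
  also have "(\<Sum>i<length w. T (Suc i)) = grp_elt (ab_word [y]) * fox_ab w x"
    unfolding fox_ab_def sum_distrib_left T_def
    by (rule sum.cong) (auto split: prod.splits simp: prefix)
  finally show ?thesis .
qed

lemma fox_ab_append: "fox_ab (w1 @ w2) x = fox_ab w1 x + grp_elt (ab_word w1) * fox_ab w2 x"
proof (induction w1)
  case Nil
  then show ?case by (simp add: fox_ab_Nil)
next
  case (Cons y w1)
  then show ?case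
    by (simp add: fox_ab_Cons[of y "w1 @ w2"] fox_ab_Cons[of y w1] ab_word_Cons[of y w1]
        grp_elt_add algebra_simps)
qed

definition fox_combination :: "'g set \<Rightarrow> ('g \<Rightarrow> 'g gring) \<Rightarrow> 'g word \<Rightarrow> 'g gring" where
  "fox_combination S c w = (\<Sum>g\<in>S. c g * fox_ab w g)"

lemma fox_combination_Nil [simp]: "fox_combination S c [] = 0"
  by (simp add: fox_combination_def fox_ab_Nil)

lemma fox_combination_append:
  "fox_combination S c (w1 @ w2) = fox_combination S c w1 + grp_elt (ab_word w1) * fox_combination S c w2"
  by (simp add: fox_combination_def fox_ab_append sum.distrib sum_distrib_left algebra_simps)

lemma fox_combination_Cons:
  "fox_combination S c (x # w) = fox_combination S c [x] + grp_elt (ab_word [x]) * fox_combination S c w"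
  using fox_combination_append[of S c "[x]" w] by simp

lemma fox_combination_letter:
  "finite S \<Longrightarrow> fox_combination S c [(g, b)] =
     (if b then - grp_elt (ab_word [(g, b)]) else 1) * (if g \<in> S then c g else 0)"
  by (simp add: fox_combination_def fox_ab_letter if_distrib[of "\<lambda>x. _ * x"] cong: if_cong)

lemma fox_combination_pos_letter:
  "finite S \<Longrightarrow> fox_combination S c [(g, False)] = (if g \<in> S then c g else 0)"
  by (simp add: fox_combination_letter)

lemma fox_combination_inv_letter:
  "finite S \<Longrightarrow> fox_combination S c [(g, \<not> b)] =
     - grp_elt (- ab_word [(g, b)]) * fox_combination S c [(g, b)]"
  by (cases b) (simp_all add: fox_combination_letter ab_word_letter grp_elt_def mult_single
      single_uminus flip: mult.assoc)

lemma fox_combination_inv_word: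
  assumes "finite S"
  shows "fox_combination S c (inv_word w) = - grp_elt (- ab_word w) * fox_combination S c w"
proof (induction w)
  case Nil
  then show ?case by (simp add: inv_word_def)
next
  case (Cons x w)
  obtain g b where x: "x = (g, b)" by (cases x)
  have "inv_word (x # w) = inv_word w @ [(g, \<not> b)]"
    by (simp add: inv_word_def x)
  then have "fox_combination S c (inv_word (x # w))
      = fox_combination S c (inv_word w) + grp_elt (- ab_word w) * fox_combination S c [(g, \<not> b)]"
    by (simp add: fox_combination_append ab_word_inv_word)
  also have "\<dots> = - grp_elt (- ab_word w) * fox_combination S c w
      - grp_elt (- ab_word w) * grp_elt (- ab_word [(g, b)]) * fox_combination S c [(g, b)]"
    using Cons assms by (simp add: fox_combination_inv_letter)
  also have "\<dots> = - grp_elt (- ab_word (x # w)) * fox_combination S c (x # w)"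
    by (simp add: x fox_combination_Cons[of _ _ _ w] ab_word_Cons[of _ w] algebra_simps
        flip: grp_elt_add)
  finally show ?case .
qed

lemma fox_combination_rel_word:
  assumes "finite S"
  shows "fox_combination S c (rel_word A B) =
    fox_combination S c A - grp_elt (ab_word A - ab_word B) * fox_combination S c B"
proof -
  have "grp_elt (ab_word A) * grp_elt (- ab_word B) = grp_elt (ab_word A - ab_word B)"
    by (simp flip: grp_elt_add)
  then show ?thesis
    using assms by (simp add: rel_word_def fox_combination_append fox_combination_inv_word
        flip: mult.assoc)
qed

lemma rel_subgroup_add:
  assumes "x \<in> rel_subgroup Rs" and "y \<in> rel_subgroup Rs"
  shows "x + y \<in> rel_subgroup Rs"
  using assms(2)
proof (induction y)
  case zero
  then show ?case using assms(1) by simp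
next
  case (plus a r)
  then show ?case using rel_subgroup.plus[of "x + a" Rs r] by (simp add: add.assoc)
next
  case (minus a r)
  then show ?case using rel_subgroup.minus[of "x + a" Rs r] by (simp add: algebra_simps)
qed

lemma rel_subgroup_uminus:
  assumes "x \<in> rel_subgroup Rs"
  shows "- x \<in> rel_subgroup Rs"
  using assms
proof (induction x)
  case zero
  then show ?case by (simp add: rel_subgroup.zero)
next
  case (plus a r)
  then show ?case using rel_subgroup.minus[of "- a" Rs r] by simp
next
  case (minus a r)
  then show ?case using rel_subgroup.plus[of "- a" Rs r] by simp
qed

lemma ab_word_in_rel_subgroup: "r \<in> Rs \<Longrightarrow> ab_word r \<in> rel_subgroup Rs"
  using rel_subgroup.plus[OF rel_subgroup.zero] by simp

lemma additive_vanishes_on_rel_subgroup: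
  fixes \<psi> :: "('g \<Rightarrow>\<^sub>0 int) \<Rightarrow> int"
  assumes \<psi>: "additive \<psi>" and vanish: "\<And>r. r \<in> Rs \<Longrightarrow> \<psi> (ab_word r) = 0"
    and "x \<in> rel_subgroup Rs"
  shows "\<psi> x = 0"
  using \<open>x \<in> rel_subgroup Rs\<close>
  by induction (simp_all add: vanish additive.zero[OF \<psi>] additive.add[OF \<psi>] additive.diff[OF \<psi>])

lemma zero_in_Lambda_grp_elt_minus_one:
  assumes "a \<in> rel_subgroup Rs"
  shows "zero_in_Lambda (rel_subgroup Rs) (grp_elt a - 1)"
proof -
  have "a - h \<in> rel_subgroup Rs \<longleftrightarrow> - h \<in> rel_subgroup Rs" for h
    using rel_subgroup_add[OF _ rel_subgroup_uminus[OF assms], of "a - h"]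
      rel_subgroup_add[OF assms, of "- h"] by auto
  then show ?thesis
    by (simp add: zero_in_Lambda_iff_coset_sum coset_sum_diff grp_elt_def coset_sum_single
        flip: single_one)
qed

lemma zero_in_Lambda_relation:
  assumes "finite S" and "rel_word A B \<in> Rs"
    and "zero_in_Lambda (rel_subgroup Rs) (fox_combination S c (rel_word A B))"
  shows "zero_in_Lambda (rel_subgroup Rs) (fox_combination S c A - fox_combination S c B)"
proof -
  have "ab_word A - ab_word B \<in> rel_subgroup Rs"
    using ab_word_in_rel_subgroup[OF assms(2)] by (simp add: ab_word_rel_word)
  moreover have "fox_combination S c A - fox_combination S c B =
      fox_combination S c (rel_word A B)
      + (grp_elt (ab_word A - ab_word B) - 1) * fox_combination S c B"
    using assms(1) by (simp add: fox_combination_rel_word algebra_simps)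
  ultimately show ?thesis
    using assms(3) by (simp add: zero_in_Lambda_add zero_in_Lambda_mult_right
        zero_in_Lambda_grp_elt_minus_one)
qed

section \<open>Relations of commutation type\<close>

lemma pos_pow_Suc: "pos_pow (Suc l) gs = map (\<lambda>g. (g, False)) gs @ pos_pow l gs"
  by (simp add: pos_pow_def)

lemma ab_word_pos_pow: "ab_word (pos_pow l gs) = (\<Sum>_<l. ab_word (map (\<lambda>g. (g, False)) gs))"
  by (induction l) (simp_all add: pos_pow_def ab_word_append)

lemma fox_combination_pos_pow:
  "fox_combination S c (pos_pow l gs) = (\<Sum>j<l. grp_elt (ab_word (map (\<lambda>g. (g, False)) gs)) ^ j)
       * fox_combination S c (map (\<lambda>g. (g, False)) gs)"
proof (induction l)
  case 0
  then show ?case by (simp add: pos_pow_def)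
next
  case (Suc l)
  then show ?case
    by (simp add: pos_pow_Suc fox_combination_append sum.lessThan_Suc_shift sum_distrib_left
        algebra_simps del: sum.lessThan_Suc)
qed

lemma ab_word_commutation_relator: "ab_word (rel_word (pos_pow l [a, b]) (pos_pow l [b, a])) = 0"
  unfolding ab_word_rel_word ab_word_pos_pow by (simp add: ab_word_def add.commute)

text \<open>With \<open>t = t\<^sub>a t\<^sub>b\<close> and \<open>Q = 1 + t + \<dots> + t\<^bsup>l-1\<^esup>\<close>, the relation \<open>(ab)\<^sup>l = (ba)\<^sup>l\<close> reads
  \<open>Q (t\<^sub>a - 1) c\<^sub>b \<equiv> Q (t\<^sub>b - 1) c\<^sub>a\<close>. Once \<open>c\<^sub>a\<close> vanishes, \<open>t\<^sub>a - 1\<close> and then \<open>(1 - t) Q = 1 - t\<^sup>l\<close>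
  are cancelled, both being non-zero-divisors since \<open>\<psi> a \<noteq> 0 = \<psi> b\<close>.\<close>

lemma zero_in_Lambda_coeff_of_commutation:
  fixes \<psi> :: "('g \<Rightarrow>\<^sub>0 int) \<Rightarrow> int"
  assumes "finite S" and "b \<in> S" and "1 \<le> l"
    and relation: "zero_in_Lambda N
      (fox_combination S c (pos_pow l [a, b]) - fox_combination S c (pos_pow l [b, a]))"
    and \<psi>: "additive \<psi>" and vanish: "\<And>x. x \<in> N \<Longrightarrow> \<psi> x = 0"
    and \<psi>_a: "\<psi> (Poly_Mapping.single a 1) \<noteq> 0" and \<psi>_b: "\<psi> (Poly_Mapping.single b 1) = 0"
    and coeff_a: "zero_in_Lambda N (fox_combination S c [(a, False)])"
  shows "zero_in_Lambda N (c b)"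
proof -
  define ta where "ta = Poly_Mapping.single a (1::int)"
  define tb where "tb = Poly_Mapping.single b (1::int)"
  define Q where "Q = (\<Sum>j<l. grp_elt (ta + tb) ^ j)"
  define ca where "ca = fox_combination S c [(a, False)]"
  have "ab_word (map (\<lambda>g. (g, False)) [a, b]) = ta + tb"
    and "ab_word (map (\<lambda>g. (g, False)) [b, a]) = ta + tb"
    by (simp_all add: ab_word_def ta_def tb_def add.commute)
  moreover have "fox_combination S c (map (\<lambda>g. (g, False)) [a, b]) = ca + grp_elt ta * c b"
    and "fox_combination S c (map (\<lambda>g. (g, False)) [b, a]) = c b + grp_elt tb * ca"
    using assms(1,2)
    by (simp_all add: ca_def ta_def tb_def fox_combination_Cons[of _ _ _ "[_]"]
        fox_combination_pos_letter ab_word_letter)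
  ultimately have "(Q * c b) * (grp_elt ta - grp_elt 0) =
      (fox_combination S c (pos_pow l [a, b]) - fox_combination S c (pos_pow l [b, a]))
      - (Q * (1 - grp_elt tb)) * ca"
    unfolding fox_combination_pos_pow Q_def by (simp add: algebra_simps)
  then have "zero_in_Lambda N ((Q * c b) * (grp_elt ta - grp_elt 0))"
    using zero_in_Lambda_diff[OF relation zero_in_Lambda_mult_left[OF coeff_a[folded ca_def]]]
    by simp
  moreover have "\<psi> ta \<noteq> \<psi> 0"
    using \<psi>_a by (simp add: ta_def additive.zero[OF \<psi>])
  ultimately have "zero_in_Lambda N (Q * c b)"
    using zero_in_Lambda_cancel_grp_elt_diff[OF _ \<psi> vanish] by blast
  moreover have "(1 - grp_elt (ta + tb)) * (Q * c b) = c b * (grp_elt 0 - grp_elt (\<Sum>_<l. ta + tb))"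
  proof -
    have "(1 - grp_elt (ta + tb)) * Q = 1 - grp_elt (\<Sum>_<l. ta + tb)"
      unfolding Q_def grp_elt_power[symmetric] by (rule one_diff_power_eq[symmetric])
    then show ?thesis by (metis grp_elt_0 mult.assoc mult.commute)
  qed
  ultimately have "zero_in_Lambda N (c b * (grp_elt 0 - grp_elt (\<Sum>_<l. ta + tb)))"
    by (metis zero_in_Lambda_mult_left)
  moreover have "\<psi> 0 \<noteq> \<psi> (\<Sum>_<l. ta + tb)"
    using \<open>1 \<le> l\<close> \<psi>_a \<psi>_b
    by (simp add: ta_def tb_def additive.zero[OF \<psi>] additive.sum[OF \<psi>] additive.add[OF \<psi>])
  ultimately show ?thesis
    using zero_in_Lambda_cancel_grp_elt_diff[OF _ \<psi> vanish] by blast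
qed

section \<open>Relations of cyclic type\<close>

lemma additive_lookup: "additive (\<lambda>x. Poly_Mapping.lookup x g)"
  by (simp add: additive_def lookup_add)

lemma ab_word_replicate:
  "ab_word (replicate q (g, b)) = Poly_Mapping.single g (if b then - int q else int q)"
  by (induction q) (auto simp: ab_word_def simp flip: single_add single_uminus)

lemma ab_word_Wj_word: "ab_word (Wj_word k w j) = Poly_Mapping.single (Wg w (j mod k)) 1"
  by (simp add: Wj_word_def ab_word_append ab_word_Cons[of _ "replicate _ _"] ab_word_replicate
      ab_word_letter single_uminus)

lemma fox_combination_replicate_notin:
  "finite S \<Longrightarrow> g \<notin> S \<Longrightarrow> fox_combination S c (replicate q (g, b)) = 0"
  by (induction q) (simp_all add: fox_combination_Cons[of _ _ _ "replicate _ _"] fox_combination_letter)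

lemma fox_combination_Wj_word:
  assumes "finite S" "Ubar \<notin> S" "Wg w (j mod k) \<in> S"
  shows "fox_combination S c (Wj_word k w j) =
    grp_elt (Poly_Mapping.single Ubar (int (j div k))) * c (Wg w (j mod k))"
  using assms
  by (simp add: Wj_word_def fox_combination_append fox_combination_Cons[of _ _ _ "replicate _ _"]
      fox_combination_replicate_notin fox_combination_pos_letter ab_word_replicate)

context
  fixes S :: "'v gen set" and c :: "'v gen \<Rightarrow> 'v gen gring" and N :: "('v gen \<Rightarrow>\<^sub>0 int) set"
    and k l :: nat and w :: 'v
  assumes finite_S: "finite S" and Ubar_notin_S: "Ubar \<notin> S"
    and Wg_in_S: "\<And>s. s < k \<Longrightarrow> Wg w s \<in> S"
    and k_pos: "0 < k" and l_pos: "1 \<le> l"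
    and Ubar_vanish: "\<And>x. x \<in> N \<Longrightarrow> Poly_Mapping.lookup x Ubar = 0"
    and cyclic_relation: "\<And>i. i < k \<Longrightarrow> zero_in_Lambda N
      (fox_combination S c (concat (map (Wj_word k w) [i..<i + l]))
       - fox_combination S c (concat (map (Wj_word k w) [i + 1..<i + l + 1])))"
begin

text \<open>Write \<open>W\<^sub>j\<close> for \<open>Wj_word k w j\<close>. Multiplied by the abelianised prefix \<open>W\<^sub>0 \<cdots> W\<^sub>a\<^sub>-\<^sub>1\<close>,
  the Fox combination of \<open>W\<^sub>a \<cdots> W\<^sub>a\<^sub>+\<^sub>d\<^sub>-\<^sub>1\<close> becomes the sum of the terms \<open>cyc_term j\<close>,
  \<open>a \<le> j < a + d\<close>, and these satisfy \<open>cyc_term (j + k) = t \<cdot> cyc_term j\<close> with \<open>t\<close> the image of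
  \<open>cyc_shift\<close>. The \<open>i\<close>-th relation says \<open>cyc_window (i + 1) \<equiv> t\<^sub>i \<cdot> cyc_window i\<close> with \<open>t\<^sub>i\<close> the
  image of \<open>w\<^sub>i\<close>; going once around the cycle and comparing with the periodicity kills
  \<open>cyc_window 0\<close>, hence every window. Consecutive windows differ by \<open>cyc_term (i + l) - cyc_term i\<close>,
  so \<open>cyc_term i \<equiv> cyc_term (i + k l) = t\<^sup>l \<cdot> cyc_term i\<close>, and \<open>1 - t\<^sup>l\<close> is cancelled because \<open>t\<close>
  has nonzero \<open>Ubar\<close>-exponent.\<close>

definition cyc_prefix :: "nat \<Rightarrow> 'v gen \<Rightarrow>\<^sub>0 int" where
  "cyc_prefix n = (\<Sum>t<n. Poly_Mapping.single (Wg w (t mod k)) 1)"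

definition cyc_term :: "nat \<Rightarrow> 'v gen gring" where
  "cyc_term j = grp_elt (cyc_prefix j + Poly_Mapping.single Ubar (int (j div k))) * c (Wg w (j mod k))"

definition cyc_window :: "nat \<Rightarrow> 'v gen gring" where
  "cyc_window i = (\<Sum>j\<in>{i..<i + l}. cyc_term j)"

definition cyc_shift :: "'v gen \<Rightarrow>\<^sub>0 int" where
  "cyc_shift = cyc_prefix k + Poly_Mapping.single Ubar 1"

lemma cyc_prefix_Suc: "cyc_prefix (Suc n) = cyc_prefix n + Poly_Mapping.single (Wg w (n mod k)) 1"
  by (simp add: cyc_prefix_def)

lemma cyc_prefix_add_k: "cyc_prefix (j + k) = cyc_prefix k + cyc_prefix j"
  by (induction j) (simp_all add: cyc_prefix_def cyc_prefix_Suc[of "_ + k"] add.assoc)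

lemma lookup_cyc_prefix_Ubar: "Poly_Mapping.lookup (cyc_prefix n) Ubar = 0"
  by (simp add: cyc_prefix_def lookup_sum lookup_single)

lemma ab_word_cyc_block:
  "ab_word (concat (map (Wj_word k w) [a..<a + d])) = cyc_prefix (a + d) - cyc_prefix a"
  by (induction d) (simp_all add: ab_word_append ab_word_Wj_word cyc_prefix_Suc)

lemma fox_combination_cyc_block:
  "grp_elt (cyc_prefix a) * fox_combination S c (concat (map (Wj_word k w) [a..<a + d]))
     = (\<Sum>j\<in>{a..<a + d}. cyc_term j)"
proof (induction d)
  case 0
  then show ?case by simp
next
  case (Suc d)
  have "Wg w ((a + d) mod k) \<in> S" using Wg_in_S k_pos by simp
  moreover have "grp_elt (cyc_prefix a) * (grp_elt (cyc_prefix (a + d) - cyc_prefix a) * (grp_elt x * y))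
      = grp_elt (cyc_prefix (a + d) + x) * y" for x y
    by (simp add: mult.assoc[symmetric] grp_elt_add[symmetric] algebra_simps)
  ultimately show ?case
    using Suc by (simp add: fox_combination_append ab_word_cyc_block
        fox_combination_Wj_word[OF finite_S Ubar_notin_S] distrib_left cyc_term_def)
qed

lemma cyc_window_step:
  assumes "i < k"
  shows "zero_in_Lambda N
    (grp_elt (Poly_Mapping.single (Wg w i) 1) * cyc_window i - cyc_window (Suc i))"
proof -
  have "grp_elt (cyc_prefix (Suc i)) = grp_elt (Poly_Mapping.single (Wg w i) 1) * grp_elt (cyc_prefix i)"
    using assms by (simp add: cyc_prefix_Suc grp_elt_add mult.commute)
  then have "grp_elt (cyc_prefix (Suc i)) * fox_combination S c (concat (map (Wj_word k w) [i..<i + l]))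
      = grp_elt (Poly_Mapping.single (Wg w i) 1) * cyc_window i"
    using fox_combination_cyc_block[of i l] by (simp add: cyc_window_def mult.assoc)
  moreover have "grp_elt (cyc_prefix (Suc i))
      * fox_combination S c (concat (map (Wj_word k w) [i + 1..<i + l + 1])) = cyc_window (Suc i)"
    using fox_combination_cyc_block[of "Suc i" l] by (simp add: cyc_window_def)
  ultimately show ?thesis
    using zero_in_Lambda_mult_left[OF cyclic_relation[OF assms], of "grp_elt (cyc_prefix (Suc i))"]
    by (simp add: right_diff_distrib)
qed

lemma cyc_term_add_k: "cyc_term (j + k) = grp_elt cyc_shift * cyc_term j"
proof -
  have "(j + k) div k = Suc (j div k)" and "(j + k) mod k = j mod k"
    using k_pos by simp_all
  moreover have "cyc_prefix (j + k) + Poly_Mapping.single Ubar (int (Suc q))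
     = cyc_shift + (cyc_prefix j + Poly_Mapping.single Ubar (int q))" for q
    by (simp add: cyc_prefix_add_k cyc_shift_def single_add add_ac)
  ultimately show ?thesis
    unfolding cyc_term_def by (simp only: grp_elt_add mult.assoc)
qed

lemma cyc_window_add_k: "cyc_window (i + k) = grp_elt cyc_shift * cyc_window i"
proof -
  have "cyc_window (i + k) = (\<Sum>j\<in>{i + k..<(i + l) + k}. cyc_term j)"
    by (simp add: cyc_window_def algebra_simps)
  also have "\<dots> = (\<Sum>j\<in>{i..<i + l}. cyc_term (j + k))"
    by (rule sum.shift_bounds_nat_ivl)
  finally show ?thesis
    by (simp add: cyc_window_def cyc_term_add_k sum_distrib_left)
qed

lemma cyc_window_around:
  "n \<le> k \<Longrightarrow> zero_in_Lambda N (cyc_window n - grp_elt (cyc_prefix n) * cyc_window 0)"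
proof (induction n)
  case 0
  then show ?case by (simp add: cyc_prefix_def zero_in_Lambda_0)
next
  case (Suc n)
  let ?t = "grp_elt (Poly_Mapping.single (Wg w n) 1)"
  have "n < k" using Suc.prems by simp
  then have decompose: "cyc_window (Suc n) - grp_elt (cyc_prefix (Suc n)) * cyc_window 0
     = ?t * (cyc_window n - grp_elt (cyc_prefix n) * cyc_window 0)
       - (?t * cyc_window n - cyc_window (Suc n))"
    by (simp add: cyc_prefix_Suc grp_elt_add algebra_simps)
  moreover have "zero_in_Lambda N (cyc_window n - grp_elt (cyc_prefix n) * cyc_window 0)"
    using Suc by simp
  ultimately show ?case
    using zero_in_Lambda_diff[OF zero_in_Lambda_mult_left cyc_window_step[OF \<open>n < k\<close>]] by metis
qed

lemma cyc_window_0: "zero_in_Lambda N (cyc_window 0)"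
proof -
  have "zero_in_Lambda N (cyc_window 0 * (grp_elt cyc_shift - grp_elt (cyc_prefix k)))"
    using cyc_window_around[of k] cyc_window_add_k[of 0] by (simp add: algebra_simps)
  moreover have "Poly_Mapping.lookup cyc_shift Ubar \<noteq> Poly_Mapping.lookup (cyc_prefix k) Ubar"
    by (simp add: cyc_shift_def lookup_add lookup_cyc_prefix_Ubar)
  ultimately show ?thesis
    using zero_in_Lambda_cancel_grp_elt_diff[OF _ additive_lookup Ubar_vanish] by blast
qed

lemma cyc_window: "zero_in_Lambda N (cyc_window n)"
proof (induction n rule: less_induct)
  case (less n)
  show ?case
  proof (cases "n < k")
    case True
    have "cyc_window n = (cyc_window n - grp_elt (cyc_prefix n) * cyc_window 0)
        + grp_elt (cyc_prefix n) * cyc_window 0"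
      by simp
    then show ?thesis
      using True cyc_window_around[of n] cyc_window_0
      by (metis less_imp_le zero_in_Lambda_add zero_in_Lambda_mult_left)
  next
    case False
    then have "cyc_window n = grp_elt cyc_shift * cyc_window (n - k)"
      using cyc_window_add_k[of "n - k"] by simp
    then show ?thesis
      using less[of "n - k"] False k_pos by (simp add: zero_in_Lambda_mult_left)
  qed
qed

lemma cyc_term_add_l: "zero_in_Lambda N (cyc_term (i + l) - cyc_term i)"
proof -
  have "cyc_term i + cyc_window (Suc i) = (\<Sum>j\<in>{i..<Suc (i + l)}. cyc_term j)"
    by (simp add: cyc_window_def sum.atLeast_Suc_lessThan)
  also have "\<dots> = cyc_window i + cyc_term (i + l)"
    by (simp add: cyc_window_def)
  finally have "cyc_term (i + l) - cyc_term i = cyc_window (Suc i) - cyc_window i"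
    by (simp add: algebra_simps)
  then show ?thesis
    by (simp add: zero_in_Lambda_diff cyc_window)
qed

lemma cyc_term_add_mult_l: "zero_in_Lambda N (cyc_term (i + n * l) - cyc_term i)"
proof (induction n)
  case 0
  then show ?case by (simp add: zero_in_Lambda_0)
next
  case (Suc n)
  have "cyc_term (i + Suc n * l) - cyc_term i
      = (cyc_term ((i + n * l) + l) - cyc_term (i + n * l)) + (cyc_term (i + n * l) - cyc_term i)"
    by (simp add: algebra_simps)
  then show ?case
    by (simp only:) (rule zero_in_Lambda_add[OF cyc_term_add_l Suc.IH])
qed

lemma cyc_term_add_mult_k: "cyc_term (i + n * k) = grp_elt cyc_shift ^ n * cyc_term i"
proof (induction n)
  case 0
  then show ?case by simp
next
  case (Suc n)
  have "cyc_term (i + Suc n * k) = cyc_term ((i + n * k) + k)"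
    by (simp add: algebra_simps)
  then show ?case
    using Suc by (simp add: cyc_term_add_k)
qed

lemma cyc_term: "zero_in_Lambda N (cyc_term i)"
proof -
  have "cyc_term (i + l * k) = grp_elt (\<Sum>_<l. cyc_shift) * cyc_term i"
    by (simp add: cyc_term_add_mult_k grp_elt_power)
  then have "zero_in_Lambda N (cyc_term i * (grp_elt (\<Sum>_<l. cyc_shift) - grp_elt 0))"
    using cyc_term_add_mult_l[of i k] by (simp add: algebra_simps)
  moreover have "Poly_Mapping.lookup (\<Sum>_<l. cyc_shift) Ubar \<noteq> Poly_Mapping.lookup 0 Ubar"
    using l_pos by (simp add: lookup_sum cyc_shift_def lookup_add lookup_cyc_prefix_Ubar)
  ultimately show ?thesis
    using zero_in_Lambda_cancel_grp_elt_diff[OF _ additive_lookup Ubar_vanish] by blast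
qed

lemma zero_in_Lambda_coeff_of_cyclic_relations:
  assumes "s < k"
  shows "zero_in_Lambda N (c (Wg w s))"
proof -
  have "c (Wg w s) = grp_elt (- cyc_prefix s) * cyc_term s"
    using assms by (simp add: cyc_term_def flip: mult.assoc grp_elt_add)
  then show ?thesis
    using cyc_term[of s] by (simp add: zero_in_Lambda_mult_left)
qed

end

section \<open>Independence of the columns other than \<open>Ubar\<close>\<close>

lemma relators_cases:
  assumes "r \<in> relators V E m u k"
  obtains (commutation) l a b where "r = rel_word (pos_pow l [a, b]) (pos_pow l [b, a])"
  | (cyclic) w i l where "r = rel_word (concat (map (Wj_word k w) [i..<i + l]))
      (concat (map (Wj_word k w) [i + 1..<i + l + 1]))"
proof -
  have "rel_word [(Vg v, False), (Ubar, False)] [(Ubar, False), (Vg v, False)]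
      = rel_word (pos_pow 1 [Vg v, Ubar]) (pos_pow 1 [Ubar, Vg v])" for v :: 'a
    by (simp add: pos_pow_def)
  then show ?thesis
    using assms that unfolding relators_def Let_def by (elim UnE CollectE exE conjE) metis+
qed

lemma additive_vanishes_on_relator_subgroup:
  fixes \<psi> :: "('v::linorder gen \<Rightarrow>\<^sub>0 int) \<Rightarrow> int"
  assumes \<psi>: "additive \<psi>" and "0 < k"
    and conjugates: "\<And>w s. s < k \<Longrightarrow>
      \<psi> (Poly_Mapping.single (Wg w s) 1) = \<psi> (Poly_Mapping.single (Wg w 0) 1)"
    and "x \<in> rel_subgroup (relators V E m u k)"
  shows "\<psi> x = 0"
proof (rule additive_vanishes_on_rel_subgroup[OF \<psi> _ \<open>x \<in> _\<close>])
  have block: "\<psi> (ab_word (concat (map (Wj_word k w) js)))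
      = int (length js) * \<psi> (Poly_Mapping.single (Wg w 0) 1)" for w js
    by (induction js) (simp_all add: additive.zero[OF \<psi>] additive.add[OF \<psi>] ab_word_append
        ab_word_Wj_word conjugates[OF mod_less_divisor[OF \<open>0 < k\<close>]] algebra_simps)
  fix r assume "r \<in> relators V E m u k"
  then show "\<psi> (ab_word r) = 0"
  proof (cases rule: relators_cases)
    case commutation
    then show ?thesis by (simp add: ab_word_commutation_relator additive.zero[OF \<psi>])
  next
    case cyclic
    then show ?thesis by (simp add: ab_word_rel_word additive.diff[OF \<psi>] block)
  qed
qed

definition Wg_degree :: "nat \<Rightarrow> 'v \<Rightarrow> ('v gen \<Rightarrow>\<^sub>0 int) \<Rightarrow> int" where
  "Wg_degree k w x = (\<Sum>j<k. Poly_Mapping.lookup x (Wg w j))"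

lemma additive_Wg_degree: "additive (Wg_degree k w)"
  by (simp add: additive_def Wg_degree_def lookup_add sum.distrib)

lemma Wg_degree_single:
  "Wg_degree k w (Poly_Mapping.single g 1) = (if \<exists>j<k. g = Wg w j then 1 else 0)"
  by (auto simp: Wg_degree_def lookup_single when_def intro!: sum.neutral)

lemma even_labeled_graph_edge:
  assumes "even_labeled_graph V E m" and "{a, b} \<in> E"
  shows "a \<in> V" "b \<in> V" "a \<noteq> b" "1 \<le> half_label m {a, b}"
proof -
  obtain x y where "{a, b} = {x, y}" "x \<noteq> y" "x \<in> V" "y \<in> V" "2 \<le> m {a, b}"
    using assms unfolding even_labeled_graph_def by metis
  then show "a \<in> V" "b \<in> V" "a \<noteq> b" "1 \<le> half_label m {a, b}"
    by (auto simp: half_label_def doubleton_eq_iff)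
qed

lemma finite_gens: "finite V \<Longrightarrow> finite (gens V E m u k)"
proof -
  assume "finite V"
  moreover have "{Wg w i | w i. w \<in> Wu V E m u \<and> i < k}
      = (\<lambda>(w, i). Wg w i) ` (Wu V E m u \<times> {..<k})"
    by auto
  ultimately show ?thesis
    by (simp add: gens_def Wu_def V2u_def)
qed

locale annihilating_column_combination =
  fixes V :: "'v::linorder set" and E :: "'v set set" and m :: "'v set \<Rightarrow> nat"
    and u :: 'v and k :: nat and c :: "'v gen \<Rightarrow> 'v gen gring"
  assumes graph: "even_labeled_graph V E m" and k_pos: "0 < k"
    and annihilates: "\<And>r. r \<in> relators V E m u k \<Longrightarrow>
      zero_in_Lambda (rel_subgroup (relators V E m u k)) (fox_combination (gens V E m u k - {Ubar}) c r)"
begin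

abbreviation N where "N \<equiv> rel_subgroup (relators V E m u k)"
abbreviation S where "S \<equiv> gens V E m u k - {Ubar}"

lemma finite_S: "finite S"
  using graph finite_gens by (auto simp: even_labeled_graph_def)

lemma Vg_in_S: "v \<in> V2u V E m u \<Longrightarrow> Vg v \<in> S"
  by (simp add: gens_def)

lemma Wg_in_S: "w \<in> Wu V E m u \<Longrightarrow> i < k \<Longrightarrow> Wg w i \<in> S"
  by (auto simp: gens_def)

lemma relation:
  "rel_word A B \<in> relators V E m u k \<Longrightarrow>
     zero_in_Lambda N (fox_combination S c A - fox_combination S c B)"
  by (rule zero_in_Lambda_relation[OF finite_S _ annihilates])

lemma lookup_Ubar_vanishes: "x \<in> N \<Longrightarrow> Poly_Mapping.lookup x Ubar = 0"
  by (rule additive_vanishes_on_relator_subgroup[OF additive_lookup k_pos])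
     (simp_all add: lookup_single)

lemma lookup_Vg_vanishes: "x \<in> N \<Longrightarrow> Poly_Mapping.lookup x (Vg v) = 0"
  by (rule additive_vanishes_on_relator_subgroup[OF additive_lookup k_pos])
     (simp_all add: lookup_single)

lemma Wg_degree_vanishes: "x \<in> N \<Longrightarrow> Wg_degree k w x = 0"
  by (rule additive_vanishes_on_relator_subgroup[OF additive_Wg_degree k_pos])
     (auto simp: Wg_degree_single k_pos)

lemma coeff_Vg:
  assumes "v \<in> V2u V E m u"
  shows "zero_in_Lambda N (c (Vg v))"
proof (rule zero_in_Lambda_coeff_of_commutation[OF finite_S Vg_in_S[OF assms] order.refl _
      additive_lookup lookup_Ubar_vanishes])
  have "rel_word (pos_pow 1 [Vg v, Ubar]) (pos_pow 1 [Ubar, Vg v]) \<in> relators V E m u k"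
    using assms unfolding relators_def Let_def pos_pow_def by auto
  then show "zero_in_Lambda N
      (fox_combination S c (pos_pow 1 [Ubar, Vg v]) - fox_combination S c (pos_pow 1 [Vg v, Ubar]))"
    by (subst zero_in_Lambda_diff_commute) (rule relation)
qed (simp_all add: lookup_single fox_combination_pos_letter[OF finite_S] zero_in_Lambda_0)

lemma coeff_Wg_of_edge_to_u:
  assumes "{u, w} \<in> E" and "w \<in> Wu V E m u" and "i < k"
  shows "zero_in_Lambda N (c (Wg w i))"
proof (rule zero_in_Lambda_coeff_of_cyclic_relations[OF finite_S _ Wg_in_S[OF assms(2)] k_pos
      even_labeled_graph_edge(4)[OF graph assms(1)] lookup_Ubar_vanishes _ \<open>i < k\<close>])
  fix j assume "j < k"
  with assms(1,2) show "zero_in_Lambda N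
      (fox_combination S c (concat (map (Wj_word k w) [j..<j + half_label m {u, w}]))
       - fox_combination S c (concat (map (Wj_word k w) [j + 1..<j + half_label m {u, w} + 1])))"
    by (intro relation) (auto simp: relators_def Let_def)
qed simp_all

lemma coeff_Wg_of_edge_to_V2:
  assumes "v \<in> V2u V E m u" and "{v, w} \<in> E" and "w \<in> Wu V E m u" and "i < k"
  shows "zero_in_Lambda N (c (Wg w i))"
proof (rule zero_in_Lambda_coeff_of_commutation[OF finite_S Wg_in_S[OF assms(3,4)]
      even_labeled_graph_edge(4)[OF graph assms(2)] _ additive_lookup lookup_Vg_vanishes])
  show "zero_in_Lambda N (fox_combination S c (pos_pow (half_label m {v, w}) [Vg v, Wg w i])
      - fox_combination S c (pos_pow (half_label m {v, w}) [Wg w i, Vg v]))"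
    using assms by (intro relation) (auto simp: relators_def Let_def)
qed (simp_all add: lookup_single fox_combination_pos_letter[OF finite_S] coeff_Vg assms(1)
    zero_in_Lambda_0)

lemma coeff_Wg_of_edge_to_W:
  assumes "y \<in> Wu V E m u" and "{y, w} \<in> E" and "w \<in> Wu V E m u" and "i < k"
    and coeff_y: "zero_in_Lambda N (c (Wg y i))"
  shows "zero_in_Lambda N (c (Wg w i))"
proof (rule zero_in_Lambda_coeff_of_commutation[OF finite_S Wg_in_S[OF assms(3,4)]
      even_labeled_graph_edge(4)[OF graph assms(2)] _ additive_Wg_degree Wg_degree_vanishes])
  have "y \<noteq> w" using even_labeled_graph_edge(3)[OF graph assms(2)] .
  then show "Wg_degree k y (Poly_Mapping.single (Wg y i) 1) \<noteq> 0"
    and "Wg_degree k y (Poly_Mapping.single (Wg w i) 1) = 0"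
    using \<open>i < k\<close> by (auto simp: Wg_degree_single)
  show "zero_in_Lambda N (fox_combination S c (pos_pow (half_label m {y, w}) [Wg y i, Wg w i])
      - fox_combination S c (pos_pow (half_label m {y, w}) [Wg w i, Wg y i]))"
  proof (cases "y < w")
    case True
    then show ?thesis using assms by (intro relation) (auto simp: relators_def Let_def)
  next
    case False
    then have "w < y" using \<open>y \<noteq> w\<close> by simp
    then have "zero_in_Lambda N (fox_combination S c (pos_pow (half_label m {w, y}) [Wg w i, Wg y i])
      - fox_combination S c (pos_pow (half_label m {w, y}) [Wg y i, Wg w i]))"
      using assms by (intro relation) (auto simp: relators_def Let_def insert_commute)
    then show ?thesis
      by (simp add: zero_in_Lambda_diff_commute insert_commute)
  qed
  show "zero_in_Lambda N (fox_combination S c [(Wg y i, False)])"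
    using fox_combination_pos_letter[OF finite_S, of c "Wg y i"] Wg_in_S[OF assms(1,4)] coeff_y
    by simp
qed

lemma coeff_Wg:
  assumes "graph_connected V E" and "u \<in> V" and "w \<in> Wu V E m u" and "i < k"
  shows "zero_in_Lambda N (c (Wg w i))"
proof -
  have "x \<in> V \<and> (x \<in> Wu V E m u \<longrightarrow> zero_in_Lambda N (c (Wg x i)))"
    if "(u, x) \<in> {(a, b). {a, b} \<in> E}\<^sup>*" for x
    using that
  proof (induction rule: rtrancl_induct)
    case base
    then show ?case using \<open>u \<in> V\<close> by (simp add: Wu_def)
  next
    case (step y x)
    then have edge: "{y, x} \<in> E" by simp
    have "y = u \<or> y \<in> V2u V E m u \<or> y \<in> Wu V E m u"
      using step.IH by (auto simp: Wu_def)
    then show ?case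
      using step.IH even_labeled_graph_edge(2)[OF graph edge] coeff_Wg_of_edge_to_u[of x i]
        coeff_Wg_of_edge_to_V2[OF _ edge _ \<open>i < k\<close>] coeff_Wg_of_edge_to_W[OF _ edge _ \<open>i < k\<close>]
        edge \<open>i < k\<close> by blast
  qed
  moreover have "(u, w) \<in> {(a, b). {a, b} \<in> E}\<^sup>*"
    using assms(1-3) by (simp add: graph_connected_def Wu_def)
  ultimately show ?thesis
    using \<open>w \<in> Wu V E m u\<close> by blast
qed

end

lemma cols_independent_gens_minus_Ubar:
  assumes "even_labeled_graph V E m" and "graph_connected V E" and "u \<in> V" and "0 < k"
  shows "cols_independent (rel_subgroup (relators V E m u k)) (relators V E m u k) fox_ab
    (gens V E m u k - {Ubar})"
  unfolding cols_independent_def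
proof (intro allI impI ballI)
  fix c :: "'a gen \<Rightarrow> 'a gen gring" and g
  assume "\<forall>r\<in>relators V E m u k. zero_in_Lambda (rel_subgroup (relators V E m u k))
    (\<Sum>g\<in>gens V E m u k - {Ubar}. c g * fox_ab r g)"
  then interpret annihilating_column_combination V E m u k c
    using assms by unfold_locales (simp_all add: fox_combination_def)
  assume "g \<in> gens V E m u k - {Ubar}"
  then show "zero_in_Lambda N (c g)"
    using coeff_Vg coeff_Wg[OF assms(2,3)] by (auto simp: gens_def)
qed

lemma card_le_frac_rank:
  assumes "finite Cs" and "S \<subseteq> Cs" and "cols_independent N Rs M S"
  shows "card S \<le> frac_rank N Rs Cs M"
  unfolding frac_rank_def
proof (rule Max_ge)
  show "finite {card S | S. S \<subseteq> Cs \<and> cols_independent N Rs M S}"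
    using assms(1) by (auto intro: finite_subset[of _ "card ` Pow Cs"])
qed (use assms in blast)

theorem lemma2p11:
  fixes V :: "'v::linorder set" and E :: "'v set set" and m :: "'v set \<Rightarrow> nat"
    and u :: 'v and k :: nat
  assumes "even_labeled_graph V E m"
    and "graph_connected V E"
    and "u \<in> V"
    and "2 \<le> k"
  shows "alexander_corank V E m u k \<le> 1"
proof -
  have "finite (gens V E m u k)"
    using assms(1) finite_gens by (auto simp: even_labeled_graph_def)
  moreover have "Ubar \<in> gens V E m u k"
    by (simp add: gens_def)
  moreover have "cols_independent (rel_subgroup (relators V E m u k)) (relators V E m u k) fox_ab
      (gens V E m u k - {Ubar})"
    using assms by (intro cols_independent_gens_minus_Ubar) simp_all
  ultimately have "card (gens V E m u k) - 1 \<le>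
      frac_rank (rel_subgroup (relators V E m u k)) (relators V E m u k) (gens V E m u k) fox_ab"
    using card_le_frac_rank[of "gens V E m u k" "gens V E m u k - {Ubar}"] by simp
  then show ?thesis
    by (simp add: alexander_corank_def Let_def)
qed

end
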